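(* Let $k\ge 2$ and let $K>0$, $\sigma>0$, $0<d_0<d_1$, $0<\beta\le \tfrac12$, and let $\theta$ be a positive even integer. Consider agents with positions $x_i(t)\in\mathbb{R}^n$ and velocities $v_i(t)\in\mathbb{R}^n$, $i=1,\dots,k$, evolving by $$\dot x_i=v_i,\qquad \dot v_i=\sum_{j=1}^k a_{ij}(x)(v_j-v_i)+\Lambda(v)\sum_{j\neq i} f_0(\|x_i-x_j\|^2)(x_i-x_j)+\Lambda(v)\sum_{j\ne i} f_1(\|x_i-x_j\|^2)(x_j-x_i),$$ where $$a_{ij}(x)=\frac{K}{(\sigma^2+\|x_i-x_j\|^2)^{\beta}},\quad \Lambda(v)=\Big(\frac1k\sum_{i>j}\|v_i-v_j\|^2\Big)^{1/2},\quad f_0(r)=\frac{1}{(r-d_0)^{\theta}},\quad f_1(r)=\frac{1}{(r-d_1)^{\theta}}.$$ Suppose the initial positions satisfy $d_0<\|x_i(0)-x_j(0)\|^2<d_1$ for all $i\neq j$, and let $(x(t),v(t))$ be a solution defined for all $t\ge 0$. Then for all $t\ge 0$ and all $i\ne j$, $$d_0<\|x_i(t)-x_j(t)\|^2<d_1 .$$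
   Context: $\|\cdot\|$ is the Euclidean norm. The term $\sum_j a_{ij}(x)(v_j-v_i)$ is the alignment term, the $f_0$ term the separation term, and the $f_1$ term the cohesion term. Note $\Lambda(v)$ equals $\big(\sum_{i=1}^k\|v_i-\bar v\|^2\big)^{1/2}$ with $\bar v=\frac1k\sum_i v_i$ the average velocity. *)

theory Defs
  imports "HOL-Analysis.Analysis"
begin

text \<open>Agents are indexed by 0..k-1. Positions/velocities are functions
  nat \<Rightarrow> 'a, where 'a is an arbitrary Euclidean space (R^n).\<close>

definition align_weight :: "real \<Rightarrow> real \<Rightarrow> real \<Rightarrow> 'a::euclidean_space \<Rightarrow> 'a \<Rightarrow> real" where
  "align_weight K \<sigma> \<beta> xi xj = K / (\<sigma>\<^sup>2 + (norm (xi - xj))\<^sup>2) powr \<beta>"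

definition Lam :: "nat \<Rightarrow> (nat \<Rightarrow> 'a::euclidean_space) \<Rightarrow> real" where
  "Lam k v = sqrt ((1 / real k) * (\<Sum>i<k. \<Sum>j<i. (norm (v i - v j))\<^sup>2))"

definition fpot :: "real \<Rightarrow> nat \<Rightarrow> real \<Rightarrow> real" where
  "fpot d \<theta> r = 1 / (r - d) ^ \<theta>"

definition flock_rhs ::
  "nat \<Rightarrow> real \<Rightarrow> real \<Rightarrow> real \<Rightarrow> real \<Rightarrow> real \<Rightarrow> nat \<Rightarrow>
   (nat \<Rightarrow> 'a::euclidean_space) \<Rightarrow> (nat \<Rightarrow> 'a) \<Rightarrow> nat \<Rightarrow> 'a" where
  "flock_rhs k K \<sigma> \<beta> d0 d1 \<theta> x v i =
     (\<Sum>j<k. align_weight K \<sigma> \<beta> (x i) (x j) *\<^sub>R (v j - v i))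
     + Lam k v *\<^sub>R (\<Sum>j\<in>{..<k} - {i}. fpot d0 \<theta> ((norm (x i - x j))\<^sup>2) *\<^sub>R (x i - x j))
     + Lam k v *\<^sub>R (\<Sum>j\<in>{..<k} - {i}. fpot d1 \<theta> ((norm (x i - x j))\<^sup>2) *\<^sub>R (x j - x i))"

end

theory Submission
  imports Defs
begin

text \<open>
  The band is invariant because the energy \<open>\<Lambda>(v) + P(x)\<close> is nonincreasing, where
  \<open>P = 1/4 \<Sum>\<^sub>i\<^sub>\<noteq>\<^sub>j \<psi>(\<parallel>x\<^sub>i - x\<^sub>j\<parallel>\<^sup>2)\<close> and \<open>\<psi>\<close> is an antiderivative of \<open>f\<^sub>1 - f\<^sub>0\<close> on \<open>(d\<^sub>0, d\<^sub>1)\<close>.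
  Since all interactions are symmetric, \<open>(\<Lambda>\<^sup>2)' = -D + \<Lambda> Q\<close> with a nonnegative alignment
  dissipation \<open>D\<close>, while \<open>P' = -Q/2\<close>; so \<open>(\<Lambda> + P)' = -D/(2\<Lambda>) \<le> 0\<close>.
  As long as the agents stay in the band, every \<open>\<psi>(\<parallel>x\<^sub>i - x\<^sub>j\<parallel>\<^sup>2)\<close> is therefore bounded by
  four times the initial energy, and because \<open>\<psi>\<close> blows up at \<open>d\<^sub>0\<close> and \<open>d\<^sub>1\<close> this keeps the
  squared distances in a closed subset of \<open>(d\<^sub>0, d\<^sub>1)\<close>; a first-exit-time argument finishes.
\<close>

section \<open>Symmetric pairwise interactions\<close>

lemma double_sum_antisym_eq_0:
  fixes g :: "nat \<Rightarrow> nat \<Rightarrow> 'a::real_vector"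
  assumes "\<And>i j. g j i = - g i j"
  shows "(\<Sum>i<k. \<Sum>j<k. g i j) = 0"
proof -
  have "(\<Sum>i<k. \<Sum>j<k. g i j) = (\<Sum>i<k. \<Sum>j<k. g j i)" by (rule sum.swap)
  also have "\<dots> = (\<Sum>i<k. \<Sum>j<k. - g i j)" by (intro sum.cong refl assms)
  also have "\<dots> = - (\<Sum>i<k. \<Sum>j<k. g i j)" by (simp add: sum_negf)
  finally have "(2::real) *\<^sub>R (\<Sum>i<k. \<Sum>j<k. g i j) = 0"
    by (simp only: scaleR_2 eq_neg_iff_add_eq_0)
  then show ?thesis by simp
qed

lemma double_sum_symmetrize:
  fixes g :: "nat \<Rightarrow> nat \<Rightarrow> real"
  shows "(\<Sum>i<k. \<Sum>j<k. g i j) = (\<Sum>i<k. \<Sum>j<k. g i j + g j i) / 2"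
  by (simp add: sum.distrib sum.swap[of g])

lemma double_sum_lower_triangle:
  fixes g :: "nat \<Rightarrow> nat \<Rightarrow> real"
  assumes "\<And>i j. g j i = g i j" and "\<And>i. g i i = 0"
  shows "(\<Sum>i<k. \<Sum>j<k. g i j) = 2 * (\<Sum>i<k. \<Sum>j<i. g i j)"
proof (induction k)
  case (Suc k)
  have "(\<Sum>i<k. g i k) = (\<Sum>i<k. g k i)" by (intro sum.cong refl assms(1))
  then show ?case using Suc by (simp add: sum.distrib assms(2))
qed simp

lemma double_sum_inner_diff:
  fixes v a :: "nat \<Rightarrow> 'a::real_inner"
  shows "(\<Sum>i<k. \<Sum>j<k. (v i - v j) \<bullet> (a i - a j))
           = 2 * real k * (\<Sum>i<k. v i \<bullet> a i) - 2 * ((\<Sum>i<k. v i) \<bullet> (\<Sum>i<k. a i))"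
proof -
  have "(\<Sum>i<k. \<Sum>j<k. (v i - v j) \<bullet> (a i - a j))
      = (\<Sum>i<k. \<Sum>j<k. v i \<bullet> a i) + (\<Sum>i<k. \<Sum>j<k. v j \<bullet> a j)
        - (\<Sum>i<k. \<Sum>j<k. v i \<bullet> a j) - (\<Sum>i<k. \<Sum>j<k. v j \<bullet> a i)"
    by (simp add: sum.distrib sum_subtractf algebra_simps)
  also have "(\<Sum>i<k. \<Sum>j<k. v j \<bullet> a i) = (\<Sum>i<k. \<Sum>j<k. v i \<bullet> a j)" by (rule sum.swap)
  also have "(\<Sum>i<k. \<Sum>j<k. v i \<bullet> a j) = (\<Sum>i<k. v i) \<bullet> (\<Sum>i<k. a i)"
    unfolding inner_sum_left inner_sum_right by (rule sum.swap)
  finally show ?thesis by (simp add: sum_distrib_left mult.assoc)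
qed

text \<open>The right-hand side of the system for symmetric weights: \<open>A\<close> plays the role of
  \<open>a\<^sub>i\<^sub>j\<close>, and \<open>c\<close> collects separation and cohesion into the single coefficient \<open>f\<^sub>0 - f\<^sub>1\<close>.\<close>

definition pairwise_interaction ::
  "nat \<Rightarrow> (nat \<Rightarrow> nat \<Rightarrow> real) \<Rightarrow> (nat \<Rightarrow> nat \<Rightarrow> real) \<Rightarrow> real \<Rightarrow> (nat \<Rightarrow> 'a::real_inner) \<Rightarrow> (nat \<Rightarrow> 'a) \<Rightarrow> nat \<Rightarrow> 'a"
  where "pairwise_interaction k A c L v y i =
           (\<Sum>j<k. A i j *\<^sub>R (v j - v i)) + L *\<^sub>R (\<Sum>j<k. c i j *\<^sub>R (y i - y j))"

lemma sum_pairwise_interaction_eq_0: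
  assumes "\<And>i j. A j i = A i j" and "\<And>i j. c j i = c i j"
  shows "(\<Sum>i<k. pairwise_interaction k A c L v y i) = 0"
proof -
  have "(\<Sum>i<k. \<Sum>j<k. A i j *\<^sub>R (v j - v i)) = 0"
    by (rule double_sum_antisym_eq_0) (metis assms(1) minus_diff_eq scaleR_minus_right)
  moreover have "(\<Sum>i<k. \<Sum>j<k. c i j *\<^sub>R (y i - y j)) = 0"
    by (rule double_sum_antisym_eq_0) (metis assms(2) minus_diff_eq scaleR_minus_right)
  ultimately show ?thesis
    by (simp add: pairwise_interaction_def sum.distrib flip: scaleR_sum_right)
qed

lemma inner_pairwise_interaction_sum:
  assumes "\<And>i j. A j i = A i j" and "\<And>i j. c j i = c i j"
  shows "2 * (\<Sum>i<k. v i \<bullet> pairwise_interaction k A c L v y i)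
           = - (\<Sum>i<k. \<Sum>j<k. A i j * (norm (v i - v j))\<^sup>2)
             + L * (\<Sum>i<k. \<Sum>j<k. c i j * ((y i - y j) \<bullet> (v i - v j)))"
proof -
  have "A i j * (v i \<bullet> (v j - v i)) + A j i * (v j \<bullet> (v i - v j)) = - (A i j * (norm (v i - v j))\<^sup>2)"
    for i j by (simp add: assms(1) power2_norm_eq_inner inner_commute algebra_simps)
  then have align: "2 * (\<Sum>i<k. \<Sum>j<k. A i j * (v i \<bullet> (v j - v i)))
      = - (\<Sum>i<k. \<Sum>j<k. A i j * (norm (v i - v j))\<^sup>2)"
    by (subst double_sum_symmetrize) (simp add: sum_negf)
  have "c i j * (v i \<bullet> (y i - y j)) + c j i * (v j \<bullet> (y j - y i)) = c i j * ((y i - y j) \<bullet> (v i - v j))"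
    for i j by (simp add: assms(2) inner_commute algebra_simps)
  then have cohesion: "2 * (\<Sum>i<k. \<Sum>j<k. c i j * (v i \<bullet> (y i - y j)))
      = (\<Sum>i<k. \<Sum>j<k. c i j * ((y i - y j) \<bullet> (v i - v j)))"
    by (subst double_sum_symmetrize) simp
  have "(\<Sum>i<k. v i \<bullet> pairwise_interaction k A c L v y i)
      = (\<Sum>i<k. \<Sum>j<k. A i j * (v i \<bullet> (v j - v i)))
        + L * (\<Sum>i<k. \<Sum>j<k. c i j * (v i \<bullet> (y i - y j)))"
    by (simp add: pairwise_interaction_def inner_add_right inner_sum_right sum.distrib
        sum_distrib_left mult.left_commute)
  then show ?thesis using align cohesion by (simp add: algebra_simps)
qed

section \<open>The barrier potential\<close>

text \<open>For even \<open>\<theta>\<close> an antiderivative of \<open>f\<^sub>1 - f\<^sub>0\<close> on \<open>(d\<^sub>0, d\<^sub>1)\<close>, tending to \<open>+\<infinity>\<close> at both ends.\<close>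

definition barrier :: "real \<Rightarrow> real \<Rightarrow> nat \<Rightarrow> real \<Rightarrow> real" where
  "barrier d0 d1 \<theta> r = (1 / (r - d0) ^ (\<theta> - 1) + 1 / (d1 - r) ^ (\<theta> - 1)) / real (\<theta> - 1)"

lemma has_real_derivative_inverse_power:
  fixes u :: real
  assumes "u \<noteq> 0"
  shows "((\<lambda>r. 1 / r ^ Suc n) has_real_derivative - (Suc n / u ^ Suc (Suc n))) (at u)"
  using assms by (auto intro!: derivative_eq_intros simp: field_simps) (cases n; simp)

lemma barrier_has_real_derivative:
  assumes "d0 < r" "r < d1" "2 \<le> \<theta>" "even \<theta>"
  shows "(barrier d0 d1 \<theta> has_real_derivative fpot d1 \<theta> r - fpot d0 \<theta> r) (at r)"
proof -
  obtain m where \<theta>: "\<theta> = Suc (Suc m)" using assms(3) by (metis add_2_eq_Suc le_Suc_ex)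
  have lower: "((\<lambda>r. 1 / (r - d0) ^ Suc m) has_real_derivative - (Suc m / (r - d0) ^ \<theta>)) (at r)"
    using DERIV_chain2[OF has_real_derivative_inverse_power DERIV_diff[OF DERIV_ident DERIV_const]]
      assms(1) \<theta> by simp
  have upper: "((\<lambda>r. 1 / (d1 - r) ^ Suc m) has_real_derivative Suc m / (d1 - r) ^ \<theta>) (at r)"
    using DERIV_chain2[OF has_real_derivative_inverse_power DERIV_diff[OF DERIV_const DERIV_ident]]
      assms(2) \<theta> by simp
  have "(r - d1) ^ \<theta> = (d1 - r) ^ \<theta>"
    using assms(4) by (metis minus_diff_eq power_minus_even)
  then have "fpot d1 \<theta> r - fpot d0 \<theta> r = (- (Suc m / (r - d0) ^ \<theta>) + Suc m / (d1 - r) ^ \<theta>) / Suc m"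
    by (simp add: fpot_def diff_divide_distrib del: of_nat_Suc)
  then show ?thesis
    using DERIV_cdivide[OF DERIV_add[OF lower upper], of "Suc m"]
    unfolding barrier_def by (simp add: \<theta> del: of_nat_Suc)
qed

lemma barrier_pos:
  assumes "d0 < r" "r < d1" "2 \<le> \<theta>"
  shows "0 < barrier d0 d1 \<theta> r"
  using assms unfolding barrier_def by (intro divide_pos_pos add_pos_pos) auto

lemma barrier_sublevel_in_closed_subset:
  assumes "2 \<le> \<theta>" "even \<theta>"
  obtains C where "closed C" "C \<subseteq> {d0<..<d1}"
    and "\<And>r. d0 < r \<Longrightarrow> r < d1 \<Longrightarrow> barrier d0 d1 \<theta> r \<le> M \<Longrightarrow> r \<in> C"
proof (cases "0 < M")
  case False
  have "r \<in> {}" if "d0 < r" "r < d1" "barrier d0 d1 \<theta> r \<le> M" for r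
    using barrier_pos[OF that(1,2) assms(1)] that(3) False by linarith
  then show ?thesis by (intro that[of "{}"]) auto
next
  case True
  define n where "n = \<theta> - 1"
  have n: "0 < n" "odd n" using assms unfolding n_def by auto
  define C where "C = {r. 1 \<le> n * M * (r - d0) ^ n \<and> 1 \<le> n * M * (d1 - r) ^ n}"
  have "closed C" unfolding C_def by (intro closed_Collect_conj closed_Collect_le continuous_intros)
  moreover have "C \<subseteq> {d0<..<d1}"
  proof
    fix r assume "r \<in> C"
    then have "0 < n * M * (r - d0) ^ n" "0 < n * M * (d1 - r) ^ n" unfolding C_def by auto
    moreover have "0 < real n * M" using True n by simp
    ultimately have "0 < (r - d0) ^ n" "0 < (d1 - r) ^ n" by (metis zero_less_mult_pos)+
    then show "r \<in> {d0<..<d1}" using n by (simp add: zero_less_power_eq)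
  qed
  moreover have "r \<in> C" if "d0 < r" "r < d1" "barrier d0 d1 \<theta> r \<le> M" for r
  proof -
    have pos: "0 < n * (r - d0) ^ n" "0 < n * (d1 - r) ^ n" using that n by auto
    have "barrier d0 d1 \<theta> r = 1 / (n * (r - d0) ^ n) + 1 / (n * (d1 - r) ^ n)"
      unfolding barrier_def n_def[symmetric] by (simp add: add_divide_distrib mult.commute)
    moreover have "0 < 1 / (n * (r - d0) ^ n)" "0 < 1 / (n * (d1 - r) ^ n)" using pos by simp_all
    ultimately have "1 / (n * (r - d0) ^ n) \<le> M" "1 / (n * (d1 - r) ^ n) \<le> M"
      using that(3) by linarith+
    with pos show ?thesis unfolding C_def by (simp add: divide_le_eq mult_ac)
  qed
  ultimately show ?thesis by (rule that)
qed

section \<open>A Lyapunov estimate and a trapping principle\<close>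

lemma regularized_sqrt_rate_bound:
  fixes w e D Q G :: real
  assumes "0 \<le> w" "0 < e" "0 \<le> D" "0 \<le> G" "\<bar>Q\<bar> \<le> G * sqrt w"
  shows "(- D + sqrt w * Q) / (2 * sqrt (w + e)) - Q / 2 \<le> G * sqrt e / 2"
proof -
  define a b where "a = sqrt w" and "b = sqrt (w + e)"
  have ab: "0 \<le> a" "a < b" "0 < b" unfolding a_def b_def using assms by auto
  have "b \<le> a + sqrt e"
    unfolding a_def b_def using assms by (simp add: sqrt_add_le_add_sqrt)
  have "Q * (a - b) \<le> \<bar>Q\<bar> * (b - a)"
    using mult_right_mono[of "- Q" "\<bar>Q\<bar>" "b - a"] ab by (simp add: algebra_simps)
  also have "\<dots> \<le> G * a * (b - a)"
    using ab assms(5) unfolding a_def by (intro mult_right_mono) auto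
  also have "\<dots> \<le> G * b * (b - a)"
    using ab assms(4) by (intro mult_right_mono mult_left_mono) auto
  finally have "Q * (a - b) / (2 * b) \<le> G * b * (b - a) / (2 * b)"
    using ab by (intro divide_right_mono) auto
  also have "\<dots> = G * (b - a) / 2" using ab by simp
  finally have "Q * (a - b) / (2 * b) \<le> G * (b - a) / 2" .
  moreover have "- D / (2 * b) \<le> 0" using assms(3) ab by simp
  moreover have "(- D + a * Q) / (2 * b) - Q / 2 = - D / (2 * b) + Q * (a - b) / (2 * b)"
    using ab by (simp add: diff_divide_distrib add_divide_distrib algebra_simps)
  moreover have "G * (b - a) \<le> G * sqrt e"
    using \<open>b \<le> a + sqrt e\<close> assms(4) by (simp add: mult_left_mono)
  ultimately show ?thesis unfolding a_def b_def by linarith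
qed

lemma sqrt_plus_potential_nonincreasing:
  fixes W P D Q :: "real \<Rightarrow> real" and G s :: real
  assumes "0 \<le> s" "0 \<le> G"
    and W': "\<And>t. t \<in> {0..s} \<Longrightarrow> (W has_real_derivative - D t + sqrt (W t) * Q t) (at t within {0..s})"
    and P': "\<And>t. t \<in> {0..s} \<Longrightarrow> (P has_real_derivative - Q t / 2) (at t within {0..s})"
    and W_nonneg: "\<And>t. t \<in> {0..s} \<Longrightarrow> 0 \<le> W t"
    and D_nonneg: "\<And>t. t \<in> {0..s} \<Longrightarrow> 0 \<le> D t"
    and Q_bound: "\<And>t. t \<in> {0..s} \<Longrightarrow> \<bar>Q t\<bar> \<le> G * sqrt (W t)"
  shows "sqrt (W s) + P s \<le> sqrt (W 0) + P 0"
proof -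
  txt \<open>\<open>sqrt W\<close> need not be differentiable where \<open>W\<close> vanishes, so differentiate
    \<open>sqrt (W + e)\<close>, whose growth rate is at most \<open>G sqrt e / 2\<close>, and let \<open>e \<rightarrow> 0\<close>.\<close>
  have regularized: "sqrt (W s + e) + P s \<le> sqrt (W 0 + e) + P 0 + G * sqrt e / 2 * s"
    if "0 < e" for e
  proof -
    define U where "U t = sqrt (W t + e) + P t - G * sqrt e / 2 * t" for t
    define U' where "U' t = (- D t + sqrt (W t) * Q t) / (2 * sqrt (W t + e)) - Q t / 2 - G * sqrt e / 2"
      for t
    have U_deriv: "(U has_real_derivative U' t) (at t within {0..s})" if "t \<in> {0..s}" for t
    proof -
      have pos: "0 < W t + e" using W_nonneg[OF that] \<open>0 < e\<close> by linarith
      have sqrt_deriv: "((\<lambda>t. sqrt (W t + e)) has_real_derivative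
          (- D t + sqrt (W t) * Q t) / (2 * sqrt (W t + e))) (at t within {0..s})"
        by (rule DERIV_cong[OF DERIV_chain'[OF DERIV_add[OF W'[OF that] DERIV_const] DERIV_real_sqrt[OF pos]]])
          (simp add: inverse_eq_divide)
      have "(U has_real_derivative (- D t + sqrt (W t) * Q t) / (2 * sqrt (W t + e)) + - Q t / 2
          - G * sqrt e / 2 * 1) (at t within {0..s})"
        unfolding U_def[abs_def] by (intro DERIV_diff DERIV_add sqrt_deriv P'[OF that] DERIV_cmult DERIV_ident)
      moreover have "(- D t + sqrt (W t) * Q t) / (2 * sqrt (W t + e)) + - Q t / 2
          - G * sqrt e / 2 * 1 = U' t" unfolding U'_def by simp
      ultimately show ?thesis by (rule DERIV_cong)
    qed
    have U'_nonpos: "U' t \<le> 0" if "t \<in> {0..s}" for t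
      using regularized_sqrt_rate_bound[OF W_nonneg[OF that] \<open>0 < e\<close> D_nonneg[OF that] \<open>0 \<le> G\<close>
          Q_bound[OF that]]
      unfolding U'_def by linarith
    obtain \<xi> where "\<xi> \<in> {0..s}" "U s - U 0 = U' \<xi> * (s - 0)"
      using mvt_very_simple[OF \<open>0 \<le> s\<close>, where f=U and f'="\<lambda>t. (*) (U' t)"] U_deriv
      unfolding has_field_derivative_def by auto
    moreover have "U' \<xi> * (s - 0) \<le> 0"
      using U'_nonpos[OF \<open>\<xi> \<in> {0..s}\<close>] \<open>0 \<le> s\<close> by (simp add: mult_nonpos_nonneg)
    ultimately have "U s \<le> U 0" by simp
    then show ?thesis unfolding U_def by simp
  qed
  have lower: "((\<lambda>e. sqrt (W s + e) + P s) \<longlongrightarrow> sqrt (W s) + P s) (at_right 0)"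
    by (auto intro!: tendsto_eq_intros)
  have upper: "((\<lambda>e. sqrt (W 0 + e) + P 0 + G * sqrt e / 2 * s) \<longlongrightarrow> sqrt (W 0) + P 0) (at_right 0)"
    by (auto intro!: tendsto_eq_intros)
  have "\<forall>\<^sub>F e in at_right 0. sqrt (W s + e) + P s \<le> sqrt (W 0 + e) + P 0 + G * sqrt e / 2 * s"
    using regularized by (auto simp: eventually_at_filter)
  then show ?thesis by (rule tendsto_le[OF trivial_limit_at_right_real upper lower])
qed

lemma continuous_on_trapped_in_open:
  fixes y :: "'i \<Rightarrow> real \<Rightarrow> 'a::topological_space"
  assumes "finite I" "open U" "closed C" "C \<subseteq> U"
    and cont: "\<And>p. p \<in> I \<Longrightarrow> continuous_on {0..} (y p)"
    and start: "\<And>p. p \<in> I \<Longrightarrow> y p 0 \<in> U"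
    and trap: "\<And>s p. 0 \<le> s \<Longrightarrow> \<forall>\<tau>\<in>{0..s}. \<forall>q\<in>I. y q \<tau> \<in> U \<Longrightarrow> p \<in> I \<Longrightarrow> y p s \<in> C"
  shows "\<forall>t\<ge>0. \<forall>p\<in>I. y p t \<in> U"
proof (rule ccontr)
  define good where "good t \<longleftrightarrow> (\<forall>p\<in>I. y p t \<in> U)" for t
  define B where "B = {t. 0 \<le> t \<and> \<not> good t}"
  assume "\<not> (\<forall>t\<ge>0. \<forall>p\<in>I. y p t \<in> U)"
  then have "B \<noteq> {}" unfolding B_def good_def by auto
  have "bdd_below B" unfolding B_def by (rule bdd_belowI[of _ 0]) auto
  define T where "T = Inf B"
  have "0 \<le> T" unfolding T_def using \<open>B \<noteq> {}\<close> by (intro cInf_greatest) (auto simp: B_def)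
  have before_T: "good \<tau>" if "0 \<le> \<tau>" "\<tau> < T" for \<tau>
    using cInf_lower[OF _ \<open>bdd_below B\<close>, of \<tau>] that unfolding T_def B_def by force
  define S where "S = {0..<T} \<union> {0}"
  have "y p T \<in> C" if "p \<in> I" for p
  proof -
    have "closure S \<subseteq> {0..}" unfolding S_def by (intro closure_minimal) auto
    then have "continuous_on (closure S) (y p)" by (rule continuous_on_subset[OF cont[OF that]])
    moreover have "y p ` S \<subseteq> C"
      using trap before_T start \<open>p \<in> I\<close> unfolding S_def good_def by fastforce
    ultimately have "y p ` closure S \<subseteq> C" using \<open>closed C\<close> by (intro image_closure_subset)
    moreover have "T \<in> closure S"
    proof (cases "T = 0")
      case False
      then have "T \<in> closure {0..<T}" using \<open>0 \<le> T\<close> by simp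
      then show ?thesis unfolding S_def by (meson closure_mono in_mono sup_ge1)
    qed (simp add: S_def closure_def)
    ultimately show ?thesis by blast
  qed
  then have "\<forall>p\<in>I. y p T \<in> U" using \<open>C \<subseteq> U\<close> by blast
  moreover have "(y p \<longlongrightarrow> y p T) (at T within {0..})" if "p \<in> I" for p
    using cont[OF that] \<open>0 \<le> T\<close> unfolding continuous_on_def by auto
  ultimately have "\<forall>\<^sub>F t in at T within {0..}. \<forall>p\<in>I. y p t \<in> U"
    using \<open>finite I\<close> \<open>open U\<close> by (intro eventually_ball_finite ballI) (auto intro: topological_tendstoD)
  then obtain \<eta> where "0 < \<eta>"
    and near_T: "\<And>t. 0 \<le> t \<Longrightarrow> t \<noteq> T \<Longrightarrow> dist t T < \<eta> \<Longrightarrow> good t"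
    unfolding eventually_at good_def by auto
  have "Inf B < T + \<eta>" using \<open>0 < \<eta>\<close> unfolding T_def by simp
  then obtain b where "b \<in> B" "b < T + \<eta>"
    using cInf_less_iff[OF \<open>B \<noteq> {}\<close> \<open>bdd_below B\<close>] by auto
  moreover have "T \<le> b" using cInf_lower[OF \<open>b \<in> B\<close> \<open>bdd_below B\<close>] unfolding T_def .
  ultimately show False
    using near_T[of b] \<open>\<forall>p\<in>I. y p T \<in> U\<close> unfolding B_def good_def
    by (cases "b = T") (auto simp: dist_real_def)
qed

lemma has_vector_derivative_inner:
  fixes f g :: "real \<Rightarrow> 'a::real_inner"
  assumes "(f has_vector_derivative f') (at t within S)" "(g has_vector_derivative g') (at t within S)"
  shows "((\<lambda>t. f t \<bullet> g t) has_real_derivative f' \<bullet> g t + f t \<bullet> g') (at t within S)"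
proof -
  have "((\<lambda>t. f t \<bullet> g t) has_derivative (\<lambda>h. f t \<bullet> (h *\<^sub>R g') + (h *\<^sub>R f') \<bullet> g t)) (at t within S)"
    using assms unfolding has_vector_derivative_def by (rule has_derivative_inner)
  then show ?thesis unfolding has_field_derivative_def
    by (rule has_derivative_eq_rhs) (simp add: fun_eq_iff algebra_simps)
qed

section \<open>The flocking system\<close>

locale flock_solution =
  fixes k :: nat and K \<sigma> \<beta> d0 d1 :: real and \<theta> :: nat
    and x v :: "nat \<Rightarrow> real \<Rightarrow> 'a::euclidean_space"
  assumes K_pos: "0 < K" and d0_pos: "0 < d0" and d0_less_d1: "d0 < d1"
    and theta_pos: "0 < \<theta>" and theta_even: "even \<theta>"
    and x_deriv: "\<And>i t. i < k \<Longrightarrow> 0 \<le> t \<Longrightarrow> (x i has_vector_derivative v i t) (at t within {0..})"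
    and v_deriv: "\<And>i t. i < k \<Longrightarrow> 0 \<le> t \<Longrightarrow>
      (v i has_vector_derivative flock_rhs k K \<sigma> \<beta> d0 d1 \<theta> (\<lambda>j. x j t) (\<lambda>j. v j t) i) (at t within {0..})"
begin

abbreviation accel :: "nat \<Rightarrow> real \<Rightarrow> 'a" where
  "accel i t \<equiv> flock_rhs k K \<sigma> \<beta> d0 d1 \<theta> (\<lambda>j. x j t) (\<lambda>j. v j t) i"

definition sqdist :: "nat \<Rightarrow> nat \<Rightarrow> real \<Rightarrow> real" where
  "sqdist i j t = (norm (x i t - x j t))\<^sup>2"

definition separated :: "real \<Rightarrow> bool" where
  "separated t \<longleftrightarrow> (\<forall>i<k. \<forall>j<k. i \<noteq> j \<longrightarrow> d0 < sqdist i j t \<and> sqdist i j t < d1)"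

definition weight :: "nat \<Rightarrow> nat \<Rightarrow> real \<Rightarrow> real" where
  "weight i j t = align_weight K \<sigma> \<beta> (x i t) (x j t)"

definition coupling :: "nat \<Rightarrow> nat \<Rightarrow> real \<Rightarrow> real" where
  "coupling i j t = fpot d0 \<theta> (sqdist i j t) - fpot d1 \<theta> (sqdist i j t)"

definition spread :: "real \<Rightarrow> real" where
  "spread t = (1 / real k) * (\<Sum>i<k. \<Sum>j<i. (norm (v i t - v j t))\<^sup>2)"

definition dissipation :: "real \<Rightarrow> real" where
  "dissipation t = (\<Sum>i<k. \<Sum>j<k. weight i j t * (norm (v i t - v j t))\<^sup>2)"

definition coupling_work :: "real \<Rightarrow> real" where
  "coupling_work t = (\<Sum>i<k. \<Sum>j<k. coupling i j t * ((x i t - x j t) \<bullet> (v i t - v j t)))"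

definition potential :: "real \<Rightarrow> real" where
  "potential t = (\<Sum>i<k. \<Sum>j\<in>{..<k} - {i}. barrier d0 d1 \<theta> (sqdist i j t)) / 4"

definition energy :: "real \<Rightarrow> real" where
  "energy t = Lam k (\<lambda>j. v j t) + potential t"

lemma theta_ge_2: "2 \<le> \<theta>"
  using theta_pos theta_even by (auto elim: evenE)

lemma Lam_eq_sqrt_spread: "Lam k (\<lambda>j. v j t) = sqrt (spread t)"
  unfolding Lam_def spread_def ..

lemma accel_eq_pairwise_interaction:
  assumes "i < k"
  shows "accel i t = pairwise_interaction k (\<lambda>i j. weight i j t) (\<lambda>i j. coupling i j t)
    (sqrt (spread t)) (\<lambda>j. v j t) (\<lambda>j. x j t) i"
proof -
  have "(\<Sum>j\<in>{..<k} - {i}. fpot d0 \<theta> ((norm (x i t - x j t))\<^sup>2) *\<^sub>R (x i t - x j t))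
      + (\<Sum>j\<in>{..<k} - {i}. fpot d1 \<theta> ((norm (x i t - x j t))\<^sup>2) *\<^sub>R (x j t - x i t))
      = (\<Sum>j\<in>{..<k} - {i}. coupling i j t *\<^sub>R (x i t - x j t))"
    unfolding sum.distrib[symmetric] coupling_def sqdist_def
    by (rule sum.cong) (auto simp: algebra_simps)
  also have "\<dots> = (\<Sum>j<k. coupling i j t *\<^sub>R (x i t - x j t))"
    using assms by (simp add: sum_diff1)
  finally show ?thesis
    unfolding flock_rhs_def pairwise_interaction_def add.assoc Lam_eq_sqrt_spread weight_def
    by (simp flip: scaleR_add_right)
qed

lemma weight_sym: "weight j i t = weight i j t"
  unfolding weight_def align_weight_def by (simp add: norm_minus_commute)

lemma coupling_sym: "coupling j i t = coupling i j t"
  unfolding coupling_def sqdist_def by (simp add: norm_minus_commute)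

lemma sum_accel_eq_0: "(\<Sum>i<k. accel i t) = 0"
  using sum_pairwise_interaction_eq_0[OF weight_sym coupling_sym]
  by (simp add: accel_eq_pairwise_interaction)

lemma inner_accel_sum:
  "2 * (\<Sum>i<k. v i t \<bullet> accel i t) = - dissipation t + sqrt (spread t) * coupling_work t"
  using inner_pairwise_interaction_sum[OF weight_sym coupling_sym]
  by (simp add: accel_eq_pairwise_interaction dissipation_def coupling_work_def)

lemma spread_eq_double_sum: "spread t = (\<Sum>i<k. \<Sum>j<k. (norm (v i t - v j t))\<^sup>2) / (2 * real k)"
  unfolding spread_def by (subst double_sum_lower_triangle) (auto simp: norm_minus_commute)

lemma spread_nonneg: "0 \<le> spread t"
  unfolding spread_def by (intro mult_nonneg_nonneg sum_nonneg) auto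

lemma dissipation_nonneg: "0 \<le> dissipation t"
  unfolding dissipation_def weight_def align_weight_def
  using K_pos by (intro sum_nonneg mult_nonneg_nonneg) auto

lemma spread_has_real_derivative:
  assumes "0 \<le> t"
  shows "(spread has_real_derivative - dissipation t + sqrt (spread t) * coupling_work t)
    (at t within {0..})"
proof -
  have "spread = (\<lambda>t. (\<Sum>i<k. \<Sum>j<k. (v i t - v j t) \<bullet> (v i t - v j t)) / (2 * real k))"
    by (simp add: fun_eq_iff spread_eq_double_sum power2_norm_eq_inner)
  moreover have "((\<lambda>t. (\<Sum>i<k. \<Sum>j<k. (v i t - v j t) \<bullet> (v i t - v j t)) / (2 * real k))
      has_real_derivative (\<Sum>i<k. \<Sum>j<k. 2 * ((v i t - v j t) \<bullet> (accel i t - accel j t))) / (2 * real k))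
      (at t within {0..})"
    using assms
    by (intro DERIV_cdivide DERIV_sum DERIV_cong[OF has_vector_derivative_inner])
      (auto intro!: has_vector_derivative_diff v_deriv simp: inner_commute)
  moreover have "(\<Sum>i<k. \<Sum>j<k. 2 * ((v i t - v j t) \<bullet> (accel i t - accel j t))) / (2 * real k)
      = 2 * (\<Sum>i<k. v i t \<bullet> accel i t)"
    using double_sum_inner_diff[of "\<lambda>i. v i t" "\<lambda>i. accel i t" k]
    by (simp add: sum_accel_eq_0 sum_distrib_left[symmetric])
  ultimately show ?thesis by (simp add: inner_accel_sum)
qed

lemma continuous_on_x: "i < k \<Longrightarrow> continuous_on {0..} (x i)"
  using continuous_on_vector_derivative x_deriv by (metis atLeast_iff)

lemma continuous_on_sqdist: "i < k \<Longrightarrow> j < k \<Longrightarrow> continuous_on {0..} (sqdist i j)"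
  unfolding sqdist_def[abs_def] by (intro continuous_intros continuous_on_x)

lemma sqdist_has_real_derivative:
  assumes "i < k" "j < k" "0 \<le> t"
  shows "(sqdist i j has_real_derivative 2 * ((x i t - x j t) \<bullet> (v i t - v j t))) (at t within {0..})"
proof -
  have "sqdist i j = (\<lambda>t. (x i t - x j t) \<bullet> (x i t - x j t))"
    by (simp add: fun_eq_iff sqdist_def power2_norm_eq_inner)
  then show ?thesis using assms
    by (auto intro!: DERIV_cong[OF has_vector_derivative_inner] has_vector_derivative_diff x_deriv
        simp: inner_commute)
qed

lemma potential_has_real_derivative:
  assumes "0 \<le> t" "separated t"
  shows "(potential has_real_derivative - coupling_work t / 2) (at t within {0..})"
proof -
  have "((\<lambda>t. barrier d0 d1 \<theta> (sqdist i j t)) has_real_derivative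
      - 2 * (coupling i j t * ((x i t - x j t) \<bullet> (v i t - v j t)))) (at t within {0..})"
    if "i < k" "j \<in> {..<k} - {i}" for i j
  proof -
    have "d0 < sqdist i j t" "sqdist i j t < d1" using assms(2) that unfolding separated_def by auto
    then show ?thesis
      using DERIV_chain2[OF barrier_has_real_derivative sqdist_has_real_derivative] that assms(1)
        theta_ge_2 theta_even
      by (auto simp: coupling_def algebra_simps)
  qed
  then have "(potential has_real_derivative
      (\<Sum>i<k. \<Sum>j\<in>{..<k} - {i}. - 2 * (coupling i j t * ((x i t - x j t) \<bullet> (v i t - v j t)))) / 4)
      (at t within {0..})"
    unfolding potential_def[abs_def] by (intro DERIV_cdivide DERIV_sum) auto
  moreover have "(\<Sum>i<k. \<Sum>j\<in>{..<k} - {i}. - 2 * (coupling i j t * ((x i t - x j t) \<bullet> (v i t - v j t))))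
      = - 2 * coupling_work t"
    by (simp add: coupling_work_def sum_diff1 sum_distrib_left)
  ultimately show ?thesis by simp
qed

lemma norm_velocity_diff_le:
  assumes "i < k" "j < k"
  shows "norm (v i t - v j t) \<le> sqrt (2 * real k * spread t)"
proof -
  have "(norm (v i t - v j t))\<^sup>2 \<le> (\<Sum>j<k. (norm (v i t - v j t))\<^sup>2)"
    using assms by (intro member_le_sum) auto
  also have "\<dots> \<le> (\<Sum>i<k. \<Sum>j<k. (norm (v i t - v j t))\<^sup>2)"
    using assms by (intro member_le_sum[where f = "\<lambda>i. \<Sum>j<k. (norm (v i t - v j t))\<^sup>2"] sum_nonneg) auto
  also have "\<dots> = 2 * real k * spread t"
    using assms by (simp add: spread_eq_double_sum)
  finally show ?thesis by (simp add: real_le_rsqrt)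
qed

lemma abs_coupling_work_le:
  "\<bar>coupling_work t\<bar> \<le> (\<Sum>i<k. \<Sum>j<k. \<bar>coupling i j t\<bar> * norm (x i t - x j t)) * sqrt (2 * real k * spread t)"
proof -
  have "\<bar>coupling_work t\<bar> \<le> (\<Sum>i<k. \<Sum>j<k. \<bar>coupling i j t * ((x i t - x j t) \<bullet> (v i t - v j t))\<bar>)"
    unfolding coupling_work_def by (rule order.trans[OF sum_abs sum_mono[OF sum_abs]])
  also have "\<dots> \<le> (\<Sum>i<k. \<Sum>j<k. \<bar>coupling i j t\<bar> * norm (x i t - x j t) * sqrt (2 * real k * spread t))"
  proof (intro sum_mono)
    fix i j assume "i \<in> {..<k}" "j \<in> {..<k}"
    then have "\<bar>(x i t - x j t) \<bullet> (v i t - v j t)\<bar> \<le> norm (x i t - x j t) * sqrt (2 * real k * spread t)"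
      using Cauchy_Schwarz_ineq2 norm_velocity_diff_le
      by (meson lessThan_iff mult_left_mono norm_ge_zero order.trans)
    then show "\<bar>coupling i j t * ((x i t - x j t) \<bullet> (v i t - v j t))\<bar>
        \<le> \<bar>coupling i j t\<bar> * norm (x i t - x j t) * sqrt (2 * real k * spread t)"
      by (simp add: abs_mult mult.assoc mult_left_mono)
  qed
  finally show ?thesis by (simp add: sum_distrib_right)
qed

lemma coupling_work_bound:
  assumes "0 \<le> s" "\<forall>\<tau>\<in>{0..s}. separated \<tau>"
  obtains G where "0 \<le> G" "\<And>\<tau>. \<tau> \<in> {0..s} \<Longrightarrow> \<bar>coupling_work \<tau>\<bar> \<le> G * sqrt (spread \<tau>)"
proof -
  define h where "h \<tau> = (\<Sum>i<k. \<Sum>j<k. \<bar>coupling i j \<tau>\<bar> * norm (x i \<tau> - x j \<tau>))" for \<tau>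
  have "continuous_on {0..s} (coupling i j)" if "i < k" "j < k" for i j
  proof -
    have "sqdist i j \<tau> \<noteq> d0 \<and> sqdist i j \<tau> \<noteq> d1" if "\<tau> \<in> {0..s}" for \<tau>
    proof (cases "i = j")
      case False
      with assms(2) that \<open>i < k\<close> \<open>j < k\<close> show ?thesis unfolding separated_def by fastforce
    qed (use d0_pos d0_less_d1 in \<open>simp add: sqdist_def\<close>)
    moreover have "continuous_on {0..s} (sqdist i j)"
      using continuous_on_sqdist[OF that] by (rule continuous_on_subset) auto
    ultimately show ?thesis
      unfolding coupling_def[abs_def] fpot_def by (intro continuous_intros) auto
  qed
  moreover have "continuous_on {0..s} (x i)" if "i < k" for i
    using continuous_on_x[OF that] by (rule continuous_on_subset) auto
  ultimately have "continuous_on {0..s} h"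
    unfolding h_def by (intro continuous_intros) auto
  then obtain B where B: "\<And>\<tau>. \<tau> \<in> {0..s} \<Longrightarrow> h \<tau> \<le> B"
    using compact_continuous_image[OF _ compact_Icc] compact_imp_bounded
    by (metis bounded_real image_eqI abs_le_D1)
  have "0 \<le> B" using B[of 0] assms(1) unfolding h_def
    by (smt (verit) atLeastAtMost_iff mult_nonneg_nonneg abs_ge_zero norm_ge_zero sum_nonneg)
  show ?thesis
  proof (rule that)
    show "0 \<le> B * sqrt (2 * real k)" using \<open>0 \<le> B\<close> by simp
    fix \<tau> assume "\<tau> \<in> {0..s}"
    have "\<bar>coupling_work \<tau>\<bar> \<le> h \<tau> * sqrt (2 * real k * spread \<tau>)"
      unfolding h_def by (rule abs_coupling_work_le)
    also have "\<dots> \<le> B * sqrt (2 * real k * spread \<tau>)"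
      using B[OF \<open>\<tau> \<in> {0..s}\<close>] spread_nonneg by (intro mult_right_mono) auto
    finally show "\<bar>coupling_work \<tau>\<bar> \<le> B * sqrt (2 * real k) * sqrt (spread \<tau>)"
      by (simp add: real_sqrt_mult mult.assoc)
  qed
qed

lemma energy_nonincreasing:
  assumes "0 \<le> s" "\<forall>\<tau>\<in>{0..s}. separated \<tau>"
  shows "energy s \<le> energy 0"
proof -
  obtain G where "0 \<le> G" "\<And>\<tau>. \<tau> \<in> {0..s} \<Longrightarrow> \<bar>coupling_work \<tau>\<bar> \<le> G * sqrt (spread \<tau>)"
    using coupling_work_bound[OF assms] by blast
  moreover have "(spread has_real_derivative - dissipation \<tau> + sqrt (spread \<tau>) * coupling_work \<tau>)
      (at \<tau> within {0..s})" if "\<tau> \<in> {0..s}" for \<tau>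
    using that by (intro DERIV_subset[OF spread_has_real_derivative]) auto
  moreover have "(potential has_real_derivative - coupling_work \<tau> / 2) (at \<tau> within {0..s})"
    if "\<tau> \<in> {0..s}" for \<tau>
    using assms(2) that by (intro DERIV_subset[OF potential_has_real_derivative]) auto
  ultimately show ?thesis
    unfolding energy_def Lam_eq_sqrt_spread
    using assms(1) spread_nonneg dissipation_nonneg by (intro sqrt_plus_potential_nonincreasing)
qed

lemma barrier_le_potential:
  assumes "separated t" "i < k" "j < k" "i \<noteq> j"
  shows "barrier d0 d1 \<theta> (sqdist i j t) \<le> 4 * potential t"
proof -
  have nonneg: "0 \<le> barrier d0 d1 \<theta> (sqdist i' j' t)" if "i' < k" "j' \<in> {..<k} - {i'}" for i' j'
  proof -
    have "d0 < sqdist i' j' t" "sqdist i' j' t < d1" using assms(1) that unfolding separated_def by auto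
    then show ?thesis using barrier_pos[OF _ _ theta_ge_2] less_imp_le by blast
  qed
  have "barrier d0 d1 \<theta> (sqdist i j t) \<le> (\<Sum>j\<in>{..<k} - {i}. barrier d0 d1 \<theta> (sqdist i j t))"
    using assms nonneg by (intro member_le_sum) auto
  also have "\<dots> \<le> (\<Sum>i<k. \<Sum>j\<in>{..<k} - {i}. barrier d0 d1 \<theta> (sqdist i j t))"
    using assms nonneg
    by (intro member_le_sum[where f = "\<lambda>i. \<Sum>j\<in>{..<k} - {i}. barrier d0 d1 \<theta> (sqdist i j t)"] sum_nonneg)
      auto
  finally show ?thesis unfolding potential_def by simp
qed

lemma barrier_le_initial_energy:
  assumes "0 \<le> s" "\<forall>\<tau>\<in>{0..s}. separated \<tau>" "i < k" "j < k" "i \<noteq> j"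
  shows "barrier d0 d1 \<theta> (sqdist i j s) \<le> 4 * energy 0"
proof -
  have "barrier d0 d1 \<theta> (sqdist i j s) \<le> 4 * potential s"
    using assms by (intro barrier_le_potential) auto
  also have "\<dots> \<le> 4 * energy s"
    unfolding energy_def Lam_eq_sqrt_spread using spread_nonneg by simp
  also have "\<dots> \<le> 4 * energy 0"
    using energy_nonincreasing[OF assms(1,2)] by simp
  finally show ?thesis .
qed

theorem separated_forever:
  assumes "separated 0" "0 \<le> t"
  shows "separated t"
proof -
  obtain C where C: "closed C" "C \<subseteq> {d0<..<d1}"
    and sublevel: "\<And>r. d0 < r \<Longrightarrow> r < d1 \<Longrightarrow> barrier d0 d1 \<theta> r \<le> 4 * energy 0 \<Longrightarrow> r \<in> C"
    using barrier_sublevel_in_closed_subset[OF theta_ge_2 theta_even, where M = "4 * energy 0"] by blast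
  define I where "I = {p. fst p < k \<and> snd p < k \<and> fst p \<noteq> snd p}"
  have separated_iff: "separated \<tau> \<longleftrightarrow> (\<forall>p\<in>I. sqdist (fst p) (snd p) \<tau> \<in> {d0<..<d1})" for \<tau>
    unfolding separated_def I_def by auto
  have "\<forall>t\<ge>0. \<forall>p\<in>I. sqdist (fst p) (snd p) t \<in> {d0<..<d1}"
  proof (rule continuous_on_trapped_in_open[OF _ open_greaterThanLessThan C])
    show "finite I" unfolding I_def
      by (rule finite_subset[of _ "{..<k} \<times> {..<k}"]) auto
    show "continuous_on {0..} (\<lambda>t. sqdist (fst p) (snd p) t)" if "p \<in> I" for p
      using that continuous_on_sqdist unfolding I_def by auto
    show "sqdist (fst p) (snd p) 0 \<in> {d0<..<d1}" if "p \<in> I" for p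
      using assms(1) that separated_iff by blast
    show "sqdist (fst p) (snd p) s \<in> C"
      if "0 \<le> s" "\<forall>\<tau>\<in>{0..s}. \<forall>q\<in>I. sqdist (fst q) (snd q) \<tau> \<in> {d0<..<d1}" "p \<in> I" for s p
    proof (rule sublevel)
      show "barrier d0 d1 \<theta> (sqdist (fst p) (snd p) s) \<le> 4 * energy 0"
        using that separated_iff by (intro barrier_le_initial_energy) (auto simp: I_def)
    qed (use that in auto)
  qed
  then show ?thesis using assms(2) separated_iff by blast
qed

end

theorem mainTheorem1:
  fixes k :: nat and K \<sigma> d0 d1 \<beta> :: real and \<theta> :: nat
    and x v :: "nat \<Rightarrow> real \<Rightarrow> 'a::euclidean_space"
  assumes "k \<ge> 2" and "K > 0" and "\<sigma> > 0" and "0 < d0" and "d0 < d1"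
    and "0 < \<beta>" and "\<beta> \<le> 1/2" and "\<theta> > 0" and "even \<theta>"
    and init: "\<And>i j. i < k \<Longrightarrow> j < k \<Longrightarrow> i \<noteq> j \<Longrightarrow>
                 d0 < (norm (x i 0 - x j 0))\<^sup>2 \<and> (norm (x i 0 - x j 0))\<^sup>2 < d1"
    and dx: "\<And>i t. i < k \<Longrightarrow> t \<ge> 0 \<Longrightarrow>
                 (x i has_vector_derivative v i t) (at t within {0..})"
    and dv: "\<And>i t. i < k \<Longrightarrow> t \<ge> 0 \<Longrightarrow>
                 (v i has_vector_derivative
                    flock_rhs k K \<sigma> \<beta> d0 d1 \<theta> (\<lambda>j. x j t) (\<lambda>j. v j t) i) (at t within {0..})"
  shows "\<forall>t\<ge>0. \<forall>i<k. \<forall>j<k. i \<noteq> j \<longrightarrow>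
           d0 < (norm (x i t - x j t))\<^sup>2 \<and> (norm (x i t - x j t))\<^sup>2 < d1"
proof -
  interpret flock_solution k K \<sigma> \<beta> d0 d1 \<theta> x v
    using assms by unfold_locales auto
  have "separated 0" using init unfolding separated_def sqdist_def by auto
  then show ?thesis using separated_forever unfolding separated_def sqdist_def by blast
qed

end
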